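(* For the hypergeometric weights described in the context and every $n\ge2$, the associated $\tau$-function satisfies $\tau^1_n=\vartheta\tau_n$.
   Context: Weights on $\mathbb N_0$: $w^{(a)}(k)=\frac{(b^{(a)}_1)_k\cdots(b^{(a)}_{M^{(a)}})_k}{(c_1)_k\cdots(c_N)_k}\frac{(\eta^{(a)})^k}{k!}$, $a\in\{1,2\}$, with parameters such that all series converge. The moment matrix $\mathscr M$ (indices from 0) has entries $\mathscr M_{n,2m}=\sum_k k^{n+m}w^{(1)}(k)$, $\mathscr M_{n,2m+1}=\sum_k k^{n+m}w^{(2)}(k)$, as functions of $(\eta^{(1)},\eta^{(2)})$. $\tau_n$ is the determinant of the leading principal $n\times n$ submatrix $\mathscr M^{[n]}$ (rows and columns $0,\dots,n-1$). The associated $\tau$-function $\tau^1_n$ is the determinant of the $n\times n$ matrix obtained from $\mathscr M^{[n]}$ by removing its row $(\mathscr M_{n-1,0},\dots,\mathscr M_{n-1,n-1})$ and appending as last row $(\mathscr M_{n,0},\dots,\mathscr M_{n,n-1})$. $\vartheta=\eta^{(1)}\partial/\partial\eta^{(1)}+\eta^{(2)}\partial/\partial\eta^{(2)}$. *)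

theory Defs
  imports "HOL-Analysis.Derivative" "Jordan_Normal_Form.Determinant"
begin

definition hw :: "real list \<Rightarrow> real list \<Rightarrow> real \<Rightarrow> nat \<Rightarrow> real" where
  "hw bs cs \<eta> k =
     (\<Prod>b\<leftarrow>bs. pochhammer b k) / (\<Prod>c\<leftarrow>cs. pochhammer c k) * \<eta> ^ k / fact k"

definition moment ::
  "real list \<Rightarrow> real list \<Rightarrow> real list \<Rightarrow> real \<Rightarrow> real \<Rightarrow> nat \<Rightarrow> nat \<Rightarrow> real" where
  "moment b1 b2 cs \<eta>1 \<eta>2 n j =
     (if even j then (\<Sum>k. real k ^ (n + j div 2) * hw b1 cs \<eta>1 k)
      else (\<Sum>k. real k ^ (n + j div 2) * hw b2 cs \<eta>2 k))"

definition tau :: "real list \<Rightarrow> real list \<Rightarrow> real list \<Rightarrow> nat \<Rightarrow> real \<Rightarrow> real \<Rightarrow> real" where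
  "tau b1 b2 cs n \<eta>1 \<eta>2 = det (mat n n (\<lambda>(i, j). moment b1 b2 cs \<eta>1 \<eta>2 i j))"

definition tau1 :: "real list \<Rightarrow> real list \<Rightarrow> real list \<Rightarrow> nat \<Rightarrow> real \<Rightarrow> real \<Rightarrow> real" where
  "tau1 b1 b2 cs n \<eta>1 \<eta>2 =
     det (mat n n (\<lambda>(i, j). moment b1 b2 cs \<eta>1 \<eta>2 (if i = n - 1 then n else i) j))"

definition euler_op :: "(real \<Rightarrow> real \<Rightarrow> real) \<Rightarrow> real \<Rightarrow> real \<Rightarrow> real" where
  "euler_op F \<eta>1 \<eta>2 =
     \<eta>1 * deriv (\<lambda>x. F x \<eta>2) \<eta>1 + \<eta>2 * deriv (\<lambda>y. F \<eta>1 y) \<eta>2"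

end

theory Submission
  imports Defs
begin

(* Column j of the moment matrix depends on eta1 alone if j is even and on eta2 alone if
   j is odd, and its entries are power series sum_k k^m w(k) eta^k.  Since
   eta d/d eta raises k^m to k^(m+1), the Euler operator theta maps the entry M_{i,j} to
   M_{i+1,j}.  Being a derivation, theta sends det M^[n] to the sum over i of the
   determinants with row i replaced by row i+1; for i < n-1 that row duplicates row i+1,
   so only the term i = n-1, which is tau^1_n, survives.
   The hypothesis on the c's is not needed: whatever junk value the division in hw takes,
   the weights are still coefficients of a power series in eta; and n >= 1 suffices. *)

lemma suminf_diffs_Euler:
  fixes c :: "nat \<Rightarrow> 'a::{real_normed_field,banach}"
  assumes "summable (\<lambda>k. diffs c k * z ^ k)"
  shows "z * (\<Sum>k. diffs c k * z ^ k) = (\<Sum>k. of_nat k * c k * z ^ k)"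
proof -
  have "(\<lambda>k. z * (diffs c k * z ^ k)) sums (z * (\<Sum>k. diffs c k * z ^ k))"
    using assms by (intro sums_mult summable_sums)
  then have "(\<lambda>k. of_nat (Suc k) * c (Suc k) * z ^ Suc k) sums (z * (\<Sum>k. diffs c k * z ^ k))"
    by (simp add: diffs_def algebra_simps)
  then have "(\<lambda>k. of_nat k * c k * z ^ k) sums (z * (\<Sum>k. diffs c k * z ^ k))"
    by (subst (asm) sums_Suc_iff) simp
  then show ?thesis
    by (rule sums_unique)
qed

lemma hw_moment_Euler:
  assumes conv: "\<And>x. \<bar>x\<bar> < r \<Longrightarrow> summable (\<lambda>k. real k ^ m * hw bs cs x k)" and \<eta>: "\<bar>\<eta>\<bar> < r"
  shows "(\<lambda>x. \<Sum>k. real k ^ m * hw bs cs x k) differentiable (at \<eta>)"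
    and "\<eta> * deriv (\<lambda>x. \<Sum>k. real k ^ m * hw bs cs x k) \<eta> = (\<Sum>k. real k ^ Suc m * hw bs cs \<eta> k)"
proof -
  define c where "c k = real k ^ m * hw bs cs 1 k" for k
  have series: "(\<lambda>k. real k ^ m * hw bs cs x k) = (\<lambda>k. c k * x ^ k)" for x
    by (simp add: fun_eq_iff c_def hw_def)
  have conv_c: "\<And>x. norm x < r \<Longrightarrow> summable (\<lambda>k. c k * x ^ k)"
    using conv by (simp add: series)
  have D: "((\<lambda>x. \<Sum>k. real k ^ m * hw bs cs x k) has_real_derivative (\<Sum>k. diffs c k * \<eta> ^ k)) (at \<eta>)"
    using termdiffs_strong'[OF conv_c] \<eta> by (simp add: series)
  then show "(\<lambda>x. \<Sum>k. real k ^ m * hw bs cs x k) differentiable (at \<eta>)"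
    using real_differentiable_def by blast
  have "\<eta> * (\<Sum>k. diffs c k * \<eta> ^ k) = (\<Sum>k. real k * c k * \<eta> ^ k)"
    using termdiff_converges[OF _ conv_c] \<eta> by (simp add: suminf_diffs_Euler)
  also have "(\<lambda>k. real k * c k * \<eta> ^ k) = (\<lambda>k. real k ^ Suc m * hw bs cs \<eta> k)"
    by (simp add: fun_eq_iff c_def hw_def)
  finally show "\<eta> * deriv (\<lambda>x. \<Sum>k. real k ^ m * hw bs cs x k) \<eta> = (\<Sum>k. real k ^ Suc m * hw bs cs \<eta> k)"
    by (simp only: DERIV_imp_deriv[OF D])
qed

lemma det_mat_Leibniz:
  "det (mat n n (\<lambda>(i, j). g i j)) =
     (\<Sum>p | p permutes {..<n}. signof p * (\<Prod>i<n. g i (p i)))"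
proof -
  have "det (mat n n (\<lambda>(i, j). g i j)) =
     (\<Sum>p | p permutes {0..<n}. signof p * (\<Prod>i=0..<n. mat n n (\<lambda>(i, j). g i j) $$ (i, p i)))"
    by (rule det_def') simp
  also have "\<dots> = (\<Sum>p | p permutes {..<n}. signof p * (\<Prod>i<n. g i (p i)))"
  proof (rule sum.cong)
    fix p assume "p \<in> {p. p permutes {..<n}}"
    then have "i < n \<Longrightarrow> p i < n" for i
      using permutes_in_image by fastforce
    then show "signof p * (\<Prod>i=0..<n. mat n n (\<lambda>(i, j). g i j) $$ (i, p i)) =
               signof p * (\<Prod>i<n. g i (p i))"
      by (auto simp: atLeast0LessThan intro!: prod.cong)
  qed (simp add: atLeast0LessThan)
  finally show ?thesis .
qed

lemma det_mat_fun_upd_row: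
  assumes "i < n"
  shows "det (mat n n (\<lambda>(r, j). (g(i := h)) r j)) =
    (\<Sum>p | p permutes {..<n}. signof p * (h (p i) * (\<Prod>k\<in>{..<n}-{i}. g k (p k))))"
proof -
  have "(\<Prod>r<n. (g(i := h)) r (p r)) = h (p i) * (\<Prod>k\<in>{..<n}-{i}. g k (p k))" for p
    using assms by (simp add: prod.remove[of "{..<n}" i])
  then show ?thesis
    by (simp add: det_mat_Leibniz)
qed

lemma det_mat_fun_upd_row_linear:
  assumes "i < n"
  shows "a * det (mat n n (\<lambda>(r, j). (g(i := u)) r j)) + b * det (mat n n (\<lambda>(r, j). (g(i := v)) r j)) =
    det (mat n n (\<lambda>(r, j). (g(i := \<lambda>j. a * u j + b * v j)) r j))"
  unfolding det_mat_fun_upd_row[OF assms]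
  by (simp add: sum_distrib_left sum.distrib[symmetric] algebra_simps)

lemma has_real_derivative_det_mat:
  assumes "\<And>i j. i < n \<Longrightarrow> j < n \<Longrightarrow> ((\<lambda>x. f x i j) has_real_derivative f' i j) (at z)"
  shows "((\<lambda>x. det (mat n n (\<lambda>(i, j). f x i j))) has_real_derivative
     (\<Sum>i<n. det (mat n n (\<lambda>(r, j). ((f z)(i := f' i)) r j)))) (at z)"
proof -
  let ?P = "{p. p permutes {..<n}}"
  have "((\<lambda>x. \<Sum>p\<in>?P. signof p * (\<Prod>i<n. f x i (p i))) has_real_derivative
      (\<Sum>p\<in>?P. signof p * (\<Sum>i<n. f' i (p i) * (\<Prod>k\<in>{..<n}-{i}. f z k (p k))))) (at z)"
  proof (intro DERIV_sum DERIV_cmult has_field_derivative_prod)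
    fix p i assume "p \<in> ?P" "i \<in> {..<n}"
    then show "((\<lambda>x. f x i (p i)) has_real_derivative f' i (p i)) (at z)"
      using assms permutes_in_image by fastforce
  qed
  moreover have "(\<Sum>p\<in>?P. signof p * (\<Sum>i<n. f' i (p i) * (\<Prod>k\<in>{..<n}-{i}. f z k (p k)))) =
      (\<Sum>i<n. \<Sum>p\<in>?P. signof p * (f' i (p i) * (\<Prod>k\<in>{..<n}-{i}. f z k (p k))))"
    by (simp add: sum_distrib_left sum.swap[of _ ?P])
  moreover have "\<dots> = (\<Sum>i<n. det (mat n n (\<lambda>(r, j). ((f z)(i := f' i)) r j)))"
    by (rule sum.cong[OF refl], rule det_mat_fun_upd_row[symmetric]) simp
  ultimately show ?thesis
    by (simp add: det_mat_Leibniz)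
qed

lemma euler_op_det_mat:
  assumes "\<And>i j. i < n \<Longrightarrow> j < n \<Longrightarrow> (\<lambda>x. F x \<eta>2 i j) differentiable (at \<eta>1)"
    and "\<And>i j. i < n \<Longrightarrow> j < n \<Longrightarrow> (\<lambda>y. F \<eta>1 y i j) differentiable (at \<eta>2)"
  shows "euler_op (\<lambda>x y. det (mat n n (\<lambda>(i, j). F x y i j))) \<eta>1 \<eta>2 =
    (\<Sum>i<n. det (mat n n (\<lambda>(r, j). ((F \<eta>1 \<eta>2)(i := \<lambda>j. euler_op (\<lambda>x y. F x y i j) \<eta>1 \<eta>2)) r j)))"
proof -
  define D1 where "D1 i j = deriv (\<lambda>x. F x \<eta>2 i j) \<eta>1" for i j
  define D2 where "D2 i j = deriv (\<lambda>y. F \<eta>1 y i j) \<eta>2" for i j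
  have "((\<lambda>x. det (mat n n (\<lambda>(i, j). F x \<eta>2 i j))) has_real_derivative
      (\<Sum>i<n. det (mat n n (\<lambda>(r, j). ((F \<eta>1 \<eta>2)(i := D1 i)) r j)))) (at \<eta>1)"
    by (rule has_real_derivative_det_mat) (use assms(1) in \<open>simp add: D1_def DERIV_deriv_iff_real_differentiable\<close>)
  moreover have "((\<lambda>y. det (mat n n (\<lambda>(i, j). F \<eta>1 y i j))) has_real_derivative
      (\<Sum>i<n. det (mat n n (\<lambda>(r, j). ((F \<eta>1 \<eta>2)(i := D2 i)) r j)))) (at \<eta>2)"
    by (rule has_real_derivative_det_mat) (use assms(2) in \<open>simp add: D2_def DERIV_deriv_iff_real_differentiable\<close>)
  ultimately have "euler_op (\<lambda>x y. det (mat n n (\<lambda>(i, j). F x y i j))) \<eta>1 \<eta>2 =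
      \<eta>1 * (\<Sum>i<n. det (mat n n (\<lambda>(r, j). ((F \<eta>1 \<eta>2)(i := D1 i)) r j))) +
      \<eta>2 * (\<Sum>i<n. det (mat n n (\<lambda>(r, j). ((F \<eta>1 \<eta>2)(i := D2 i)) r j)))"
    by (simp only: euler_op_def DERIV_imp_deriv)
  also have "\<dots> = (\<Sum>i<n. \<eta>1 * det (mat n n (\<lambda>(r, j). ((F \<eta>1 \<eta>2)(i := D1 i)) r j)) +
      \<eta>2 * det (mat n n (\<lambda>(r, j). ((F \<eta>1 \<eta>2)(i := D2 i)) r j)))"
    by (simp only: sum_distrib_left sum.distrib)
  also have "\<dots> = (\<Sum>i<n. det (mat n n (\<lambda>(r, j). ((F \<eta>1 \<eta>2)(i := \<lambda>j. \<eta>1 * D1 i j + \<eta>2 * D2 i j)) r j)))"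
    by (rule sum.cong[OF refl], rule det_mat_fun_upd_row_linear) simp
  also have "\<dots> = (\<Sum>i<n. det (mat n n (\<lambda>(r, j). ((F \<eta>1 \<eta>2)(i := \<lambda>j. euler_op (\<lambda>x y. F x y i j) \<eta>1 \<eta>2)) r j)))"
    by (simp only: euler_op_def D1_def D2_def)
  finally show ?thesis .
qed

lemma sum_det_mat_row_shift:
  assumes "n \<ge> 1"
  shows "(\<Sum>i<n. det (mat n n (\<lambda>(r, j). (g(i := g (Suc i))) r j))) =
    det (mat n n (\<lambda>(r, j). g (if r = n - 1 then n else r) j))"
proof -
  obtain m where n: "n = Suc m"
    using assms by (cases n) auto
  have "det (mat n n (\<lambda>(r, j). (g(i := g (Suc i))) r j)) = 0" if "i < m" for i
    by (rule det_identical_rows[of _ n i "Suc i"]) (use that n in \<open>auto intro!: eq_vecI\<close>)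
  then have "(\<Sum>i<n. det (mat n n (\<lambda>(r, j). (g(i := g (Suc i))) r j))) =
      det (mat n n (\<lambda>(r, j). (g(m := g n)) r j))"
    by (simp add: n)
  also have "(\<lambda>(r, j). (g(m := g n)) r j) = (\<lambda>(r, j). g (if r = n - 1 then n else r) j)"
    by (auto simp: n)
  finally show ?thesis .
qed

context
  fixes b1 b2 cs :: "real list" and r1 r2 \<eta>1 \<eta>2 :: real
  assumes conv1: "\<forall>j::nat. \<forall>x. \<bar>x\<bar> < r1 \<longrightarrow> summable (\<lambda>k. real k ^ j * hw b1 cs x k)"
    and conv2: "\<forall>j::nat. \<forall>x. \<bar>x\<bar> < r2 \<longrightarrow> summable (\<lambda>k. real k ^ j * hw b2 cs x k)"
    and in1: "\<bar>\<eta>1\<bar> < r1" and in2: "\<bar>\<eta>2\<bar> < r2"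
begin

lemma moment_differentiable:
  shows "(\<lambda>x. moment b1 b2 cs x \<eta>2 i j) differentiable (at \<eta>1)"
    and "(\<lambda>y. moment b1 b2 cs \<eta>1 y i j) differentiable (at \<eta>2)"
proof -
  have "(\<lambda>x. \<Sum>k. real k ^ m * hw b1 cs x k) differentiable (at \<eta>1)"
    and "(\<lambda>y. \<Sum>k. real k ^ m * hw b2 cs y k) differentiable (at \<eta>2)" for m
    by (rule hw_moment_Euler(1); use conv1 conv2 in1 in2 in blast)+
  then show "(\<lambda>x. moment b1 b2 cs x \<eta>2 i j) differentiable (at \<eta>1)"
    and "(\<lambda>y. moment b1 b2 cs \<eta>1 y i j) differentiable (at \<eta>2)"
    by (cases "even j"; simp add: moment_def)+
qed

lemma euler_op_moment:
  "euler_op (\<lambda>x y. moment b1 b2 cs x y i j) \<eta>1 \<eta>2 = moment b1 b2 cs \<eta>1 \<eta>2 (Suc i) j"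
  using hw_moment_Euler(2)[of r1 _ b1 cs \<eta>1] hw_moment_Euler(2)[of r2 _ b2 cs \<eta>2] conv1 conv2 in1 in2
  by (simp add: euler_op_def moment_def)

end

theorem mainTheorem9:
  fixes b1 b2 cs :: "real list" and r1 r2 \<eta>1 \<eta>2 :: real and n :: nat
  assumes cs_ok: "\<forall>c\<in>set cs. \<forall>m::nat. c \<noteq> - real m"
    and conv1: "\<forall>j::nat. \<forall>x. \<bar>x\<bar> < r1 \<longrightarrow> summable (\<lambda>k. real k ^ j * hw b1 cs x k)"
    and conv2: "\<forall>j::nat. \<forall>x. \<bar>x\<bar> < r2 \<longrightarrow> summable (\<lambda>k. real k ^ j * hw b2 cs x k)"
    and in1: "\<bar>\<eta>1\<bar> < r1" and in2: "\<bar>\<eta>2\<bar> < r2"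
    and n: "n \<ge> 2"
  shows "tau1 b1 b2 cs n \<eta>1 \<eta>2 = euler_op (tau b1 b2 cs n) \<eta>1 \<eta>2"
proof -
  let ?M = "moment b1 b2 cs \<eta>1 \<eta>2"
  have tau: "tau b1 b2 cs n = (\<lambda>x y. det (mat n n (\<lambda>(i, j). moment b1 b2 cs x y i j)))"
    by (simp add: tau_def fun_eq_iff)
  have "euler_op (tau b1 b2 cs n) \<eta>1 \<eta>2 =
      (\<Sum>i<n. det (mat n n (\<lambda>(r, j). (?M(i := \<lambda>j. euler_op (\<lambda>x y. moment b1 b2 cs x y i j) \<eta>1 \<eta>2)) r j)))"
    unfolding tau by (rule euler_op_det_mat) (use moment_differentiable[OF conv1 conv2 in1 in2] in auto)
  also have "\<dots> = (\<Sum>i<n. det (mat n n (\<lambda>(r, j). (?M(i := ?M (Suc i))) r j)))"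
    by (simp only: euler_op_moment[OF conv1 conv2 in1 in2])
  also have "\<dots> = tau1 b1 b2 cs n \<eta>1 \<eta>2"
    using sum_det_mat_row_shift[of n ?M] n by (simp add: tau1_def)
  finally show ?thesis by simp
qed

end
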